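(* Let $\mathbb{F}$ be a field and let $(\mathbb{F}(\alpha,\beta),\sigma)$ be a bivariate difference field extension of $\mathbb{F}$ with $\sigma|_{\mathbb{F}}=\mathrm{id}$, $\sigma(\alpha)=\beta$, $\sigma(\beta)=u\alpha+v\beta$ ($u\in\mathbb{F}\setminus\{0\}$, $v\in\mathbb{F}$). Let $A=\begin{pmatrix}0&u\\1&v\end{pmatrix}$ and assume that $A$ has two distinct eigenvalues $\lambda_1\neq\lambda_2$ in $\mathbb{F}$ such that $\lambda_1/\lambda_2$ is not a root of unity. Let $a,b\in\mathbb{F}[\alpha,\beta]$ be two relatively prime homogeneous polynomials. Then $\mathrm{Spr}_\sigma(a,b)$ is a finite set.
   Context: A bivariate difference field extension $(\mathbb{F}(\alpha,\beta),\sigma)$ of a difference field $(\mathbb{F},\sigma)$ is the rational function field $\mathbb{F}(\alpha,\beta)$ in two algebraically independent transcendental elements $\alpha,\beta$ over $\mathbb{F}$, together with an automorphism $\sigma$ of $\mathbb{F}(\alpha,\beta)$ extending $\sigma$ on $\mathbb{F}$ and satisfying $\sigma(\alpha)=\beta$, $\sigma(\beta)=u\alpha+v\beta$. $\deg$ denotes total degree in $\alpha,\beta$. For nonzero $p,q\in\mathbb{F}[\alpha,\beta]$, the spread is $\mathrm{Spr}_\sigma(p,q)=\{m\in\mathbb{N} : \deg(\gcd(p,\sigma^m q))>0\}$. *)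

theory Defs
  imports "HOL-Computational_Algebra.Computational_Algebra" "Jordan_Normal_Form.Char_Poly"
begin

text \<open>Bivariate polynomials F[alpha,beta] are represented as 'a poly poly:
  the outer variable is beta, the inner variable (coefficients) is alpha.
  The monomial alpha^j beta^i has coefficient coeff (coeff p i) j.\<close>

definition bv_alpha :: "'a::comm_ring_1 poly poly" where
  "bv_alpha = [:[:0, 1:]:]"

definition bv_beta :: "'a::comm_ring_1 poly poly" where
  "bv_beta = [:0, 1:]"

definition bv_const :: "'a::comm_ring_1 \<Rightarrow> 'a poly poly" where
  "bv_const c = [:[:c:]:]"

definition bv_eval :: "'a::comm_ring_1 poly poly \<Rightarrow> 'a poly poly \<Rightarrow> 'a poly poly \<Rightarrow> 'a poly poly" where
  "bv_eval p x y = (\<Sum>i\<le>degree p. \<Sum>j\<le>degree (coeff p i).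
       bv_const (coeff (coeff p i) j) * x ^ j * y ^ i)"

definition bv_sigma :: "'a::comm_ring_1 \<Rightarrow> 'a \<Rightarrow> 'a poly poly \<Rightarrow> 'a poly poly" where
  "bv_sigma u v p = bv_eval p bv_beta (bv_const u * bv_alpha + bv_const v * bv_beta)"

definition total_degree :: "'a::zero poly poly \<Rightarrow> nat" where
  "total_degree p = Max (insert 0 {i + j | i j. coeff (coeff p i) j \<noteq> 0})"

definition homogeneous :: "'a::zero poly poly \<Rightarrow> bool" where
  "homogeneous p \<longleftrightarrow> (\<exists>d. \<forall>i j. coeff (coeff p i) j \<noteq> 0 \<longrightarrow> i + j = d)"

definition spread :: "'a::field_gcd \<Rightarrow> 'a \<Rightarrow> 'a poly poly \<Rightarrow> 'a poly poly \<Rightarrow> nat set" where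
  "spread u v p q = {m. total_degree (gcd p ((bv_sigma u v ^^ m) q)) > 0}"

definition root_of_unity :: "'a::field \<Rightarrow> bool" where
  "root_of_unity z \<longleftrightarrow> (\<exists>n>0. z ^ n = 1)"

definition shift_matrix :: "'a::field \<Rightarrow> 'a \<Rightarrow> 'a mat" where
  "shift_matrix u v = mat_of_rows_list 2 [[0, u], [1, v]]"

end

theory Submission
  imports Defs
begin

(* The linear forms x = beta - l2 alpha and y = beta - l1 alpha are eigenvectors of sigma with
   eigenvalues l1 and l2, so in the coordinates x, y the m-th power of sigma is the scaling
   p(x, y) |-> p(l1^m x, l2^m y).  A common factor of a and sigma^m b yields prime factors p of a
   and q of b such that p divides the m-th scaling of q.  If one pair (p, q) served two exponents
   m < m', then q would be fixed up to a constant by the scaling (l1^k, l2^k), k = m' - m.  As b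
   is homogeneous, uniform scalings permute its finitely many prime factors, so some uniform
   scaling (t^j, t^j), t = l1/l2, fixes q up to a constant as well.  Since neither t nor l1/l2 is
   a root of unity, the two eigen-equations force q to be a monomial; then every scaling fixes q
   up to a unit, so p divides q, contradicting the coprimality of a and b.  Hence each of the
   finitely many pairs (p, q) accounts for at most one m. *)

lemma idom_isomI:
  fixes f :: "'a::idom \<Rightarrow> 'b::idom"
  assumes "comm_ring_hom f" and "\<And>x. g (f x) = x" and "\<And>y. f (g y) = y"
  shows "idom_isom f"
proof -
  interpret comm_ring_hom f by fact
  show ?thesis
    by unfold_locales (metis assms(2) hom_zero, metis assms(3) surjI)
qed

lemma is_unit_isom_iff:
  fixes f :: "'a::{idom,algebraic_semidom} \<Rightarrow> 'b::{idom,algebraic_semidom}"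
  assumes "idom_isom f"
  shows "is_unit (f x) \<longleftrightarrow> is_unit x"
proof -
  interpret idom_isom f by fact
  show ?thesis using hom_dvd_hom[of x 1] by simp
qed

lemma prime_elem_isom:
  fixes f :: "'a::{idom,algebraic_semidom} \<Rightarrow> 'b::{idom,algebraic_semidom}"
  assumes "idom_isom f" and "prime_elem p"
  shows "prime_elem (f p)"
proof -
  interpret idom_isom f by fact
  have "f p dvd a' \<or> f p dvd b'" if "f p dvd a' * b'" for a' b'
    using that assms(2) by (simp add: inv.hom_mult prime_elem_dvd_mult_iff)
  then show ?thesis
    using assms(2) by (auto simp: prime_elem_def is_unit_isom_iff[OF assms(1)])
qed

lemma coprime_isom_iff:
  fixes f :: "'a::{idom,algebraic_semidom} \<Rightarrow> 'b::{idom,algebraic_semidom}"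
  assumes "idom_isom f"
  shows "coprime (f x) (f y) \<longleftrightarrow> coprime x y"
proof -
  interpret idom_isom f by fact
  show ?thesis
    unfolding coprime_def by (metis bij bij_pointE hom_dvd_hom is_unit_isom_iff[OF assms])
qed

lemma power_inject_exp_not_root_of_unity:
  fixes z :: "'a::field"
  assumes "z \<noteq> 0" and "\<not> root_of_unity z" and "z ^ m = z ^ n"
  shows "m = n"
proof -
  have False if "k < l" and "z ^ k = z ^ l" for k l
  proof -
    have "z ^ l = z ^ k * z ^ (l - k)"
      using \<open>k < l\<close> by (simp flip: power_add)
    with that(2) assms(1) have "z ^ (l - k) = 1"
      by simp
    moreover have "l - k > 0"
      using \<open>k < l\<close> by simp
    ultimately show False
      using assms(2) unfolding root_of_unity_def by blast
  qed
  with assms(3) show ?thesis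
    by (metis linorder_neqE_nat)
qed

lemma not_root_of_unity_power:
  fixes z :: "'a::field"
  assumes "\<not> root_of_unity z" and "k > 0"
  shows "\<not> root_of_unity (z ^ k)"
  using assms by (metis mult_pos_pos power_mult root_of_unity_def)

section \<open>Substitution in bivariate polynomials\<close>

interpretation bv_const: comm_ring_hom "bv_const :: 'a::comm_ring_1 \<Rightarrow> 'a poly poly"
  by unfold_locales (auto simp: bv_const_def one_pCons)

lemma bv_eval_conv_poly:
  "bv_eval p x y = poly (map_poly (\<lambda>c. poly (map_poly bv_const c) x) p) y"
proof -
  have inner: "poly (map_poly bv_const c) x = (\<Sum>j\<le>degree c. bv_const (coeff c j) * x ^ j)" for c
    using eval_poly_as_sum[of bv_const c x] by (simp add: eval_poly_def mult.commute)
  have "poly (map_poly (\<lambda>c. poly (map_poly bv_const c) x) p) y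
     = (\<Sum>i\<le>degree p. y ^ i * poly (map_poly bv_const (coeff p i)) x)"
    using eval_poly_as_sum[of "\<lambda>c. poly (map_poly bv_const c) x" p y] by (simp add: eval_poly_def)
  also have "\<dots> = bv_eval p x y"
    unfolding bv_eval_def inner by (simp add: sum_distrib_left mult_ac)
  finally show ?thesis by simp
qed

interpretation bv_eval: comm_ring_hom "\<lambda>p. bv_eval p x y" for x y :: "'a::comm_ring_1 poly poly"
proof -
  interpret inner: map_poly_comm_ring_hom "bv_const :: 'a \<Rightarrow> 'a poly poly" ..
  interpret comm_ring_hom "\<lambda>c. poly (map_poly (bv_const :: 'a \<Rightarrow> 'a poly poly) c) x"
    by unfold_locales (auto simp: inner.hom_mult inner.hom_add)
  interpret outer: map_poly_comm_ring_hom "\<lambda>c. poly (map_poly (bv_const :: 'a \<Rightarrow> 'a poly poly) c) x" ..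
  show "comm_ring_hom (\<lambda>p. bv_eval p x y)"
    unfolding bv_eval_conv_poly by unfold_locales (auto simp: outer.hom_mult outer.hom_add)
qed

lemma bv_eval_const [simp]: "bv_eval (bv_const c) x y = bv_const c"
  by (simp add: bv_eval_def bv_const_def)

lemma bv_eval_alpha [simp]: "bv_eval bv_alpha x y = x"
  by (simp add: bv_eval_def bv_const_def bv_alpha_def one_pCons[symmetric]
      bv_const.hom_one[unfolded bv_const_def])

lemma bv_eval_beta [simp]: "bv_eval bv_beta x y = y"
  by (simp add: bv_eval_def bv_const_def bv_beta_def one_pCons[symmetric]
      bv_const.hom_one[unfolded bv_const_def])

lemma bv_const_mult_monom: "bv_const c * bv_alpha ^ j * bv_beta ^ i = monom (monom c j) i"
proof -
  have "bv_alpha ^ j = [:monom (1::'a) j:]"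
    by (simp add: bv_alpha_def poly_const_pow x_as_monom monom_power)
  moreover have "bv_beta ^ i = monom (1::'a poly) i"
    by (simp add: bv_beta_def x_as_monom monom_power)
  ultimately show ?thesis
    by (simp add: bv_const_def monom_0[symmetric] mult_monom)
qed

lemma bv_eval_alpha_beta [simp]: "bv_eval p bv_alpha bv_beta = p"
  unfolding bv_eval_def bv_const_mult_monom
  by (simp add: monom_sum[symmetric] poly_as_sum_of_monoms)

lemma comm_ring_hom_eq_bv_eval:
  assumes "comm_ring_hom f" and "\<And>c. f (bv_const c) = bv_const c"
  shows "f p = bv_eval p (f bv_alpha) (f bv_beta)"
proof -
  interpret comm_ring_hom f by fact
  have "f p = f (bv_eval p bv_alpha bv_beta)" by simp
  also have "\<dots> = bv_eval p (f bv_alpha) (f bv_beta)"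
    unfolding bv_eval_def by (simp add: hom_sum hom_mult hom_power assms(2))
  finally show ?thesis .
qed

lemma bv_eval_bv_eval:
  "bv_eval (bv_eval p x y) x' y' = bv_eval p (bv_eval x x' y') (bv_eval y x' y')"
proof -
  have "comm_ring_hom (\<lambda>p. bv_eval (bv_eval p x y) x' y')"
    by unfold_locales (simp_all add: bv_eval.hom_mult bv_eval.hom_add)
  from comm_ring_hom_eq_bv_eval[OF this] show ?thesis by simp
qed

lemma coeff_bv_const_mult [simp]: "coeff (coeff (bv_const c * p) i) j = c * coeff (coeff p i) j"
  by (simp add: bv_const_def)

lemma is_unit_bv_iff: "is_unit g \<longleftrightarrow> (\<exists>c. c \<noteq> 0 \<and> g = bv_const c)"
  for g :: "'a::field poly poly"
proof
  assume "is_unit g"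
  then obtain c where "g = [:c:]" and "is_unit c"
    by (auto simp: is_unit_poly_iff)
  moreover obtain d where "c = [:d:]" and "d \<noteq> 0"
    using is_unit_polyE[OF \<open>is_unit c\<close>] by (metis dvd_0_left_iff zero_neq_one)
  ultimately show "\<exists>c. c \<noteq> 0 \<and> g = bv_const c"
    by (auto simp: bv_const_def)
qed (auto simp: is_unit_poly_iff bv_const_def)

lemma total_degree_bv_const [simp]: "total_degree (bv_const c) = 0"
proof -
  have "insert 0 {i + j |i j. coeff (coeff (bv_const c) i) j \<noteq> 0} = {0}"
    by (auto simp: bv_const_def coeff_const split: if_splits)
  then show ?thesis
    unfolding total_degree_def by (simp only: Max_singleton)
qed

lemma spread_subset_not_coprime: "spread u v a b \<subseteq> {m. \<not> coprime a ((bv_sigma u v ^^ m) b)}"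
proof
  fix m
  assume "m \<in> spread u v a b"
  then have "\<not> is_unit (gcd a ((bv_sigma u v ^^ m) b))"
    by (auto simp: spread_def is_unit_bv_iff)
  then show "m \<in> {m. \<not> coprime a ((bv_sigma u v ^^ m) b)}"
    by (simp add: coprime_iff_gcd_eq_1)
qed

section \<open>Diagonal scalings\<close>

definition bv_scale :: "'a::comm_ring_1 \<Rightarrow> 'a \<Rightarrow> 'a poly poly \<Rightarrow> 'a poly poly" where
  "bv_scale s1 s2 p = bv_eval p (bv_const s1 * bv_alpha) (bv_const s2 * bv_beta)"

interpretation bv_scale: comm_ring_hom "bv_scale s1 s2" for s1 s2 :: "'a::comm_ring_1"
  by (simp add: bv_scale_def[abs_def] bv_eval.comm_ring_hom_axioms)

lemma coeff_bv_scale [simp]: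
  "coeff (coeff (bv_scale s1 s2 p) i) j = s1 ^ j * s2 ^ i * coeff (coeff p i) j"
proof -
  have "bv_scale s1 s2 p = (\<Sum>i\<le>degree p.
      monom (\<Sum>j\<le>degree (coeff p i). monom (s1 ^ j * s2 ^ i * coeff (coeff p i) j) j) i)"
    unfolding bv_scale_def bv_eval_def monom_sum
    by (intro sum.cong refl)
      (simp add: power_mult_distrib bv_const.hom_power bv_const.hom_mult mult_ac
        flip: bv_const_mult_monom)
  then show ?thesis
    by (auto simp: coeff_sum coeff_eq_0 not_le)
qed

lemma bv_scale_bv_scale: "bv_scale r1 r2 (bv_scale s1 s2 p) = bv_scale (r1 * s1) (r2 * s2) p"
  by (intro poly_eqI) (simp add: power_mult_distrib mult_ac)

lemma bv_scale_1_1 [simp]: "bv_scale 1 1 p = p"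
  by (intro poly_eqI) simp

lemma bv_scale_bv_const_mult: "bv_scale s1 s2 (bv_const c * p) = bv_const c * bv_scale s1 s2 p"
  by (intro poly_eqI) (simp only: coeff_bv_scale coeff_bv_const_mult mult.left_commute)

lemma bv_scale_bv_const [simp]: "bv_scale s1 s2 (bv_const c) = bv_const c"
  by (simp add: bv_scale_def)

lemma bv_scale_alpha [simp]: "bv_scale s1 s2 bv_alpha = bv_const s1 * bv_alpha"
  by (simp add: bv_scale_def)

lemma bv_scale_beta [simp]: "bv_scale s1 s2 bv_beta = bv_const s2 * bv_beta"
  by (simp add: bv_scale_def)

lemma bv_scale_bv_eval:
  "bv_scale s1 s2 (bv_eval p x y) = bv_eval p (bv_scale s1 s2 x) (bv_scale s1 s2 y)"
  by (simp add: bv_scale_def bv_eval_bv_eval)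

lemma bv_eval_bv_scale:
  "bv_eval (bv_scale s1 s2 p) x y = bv_eval p (bv_const s1 * x) (bv_const s2 * y)"
  by (simp add: bv_scale_def bv_eval_bv_eval bv_eval.hom_mult)

lemma idom_isom_bv_scale:
  fixes s1 s2 :: "'a::field"
  assumes "s1 \<noteq> 0" and "s2 \<noteq> 0"
  shows "idom_isom (bv_scale s1 s2)"
  by (rule idom_isomI[where g = "bv_scale (inverse s1) (inverse s2)"])
    (use assms in \<open>simp_all add: bv_scale.comm_ring_hom_axioms bv_scale_bv_scale\<close>)

lemma bv_scale_eq_0_iff [simp]:
  fixes s1 s2 :: "'a::field"
  assumes "s1 \<noteq> 0" and "s2 \<noteq> 0"
  shows "bv_scale s1 s2 p = 0 \<longleftrightarrow> p = 0"
proof -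
  interpret idom_isom "bv_scale s1 s2"
    using assms by (rule idom_isom_bv_scale)
  show ?thesis by (rule hom_0_iff)
qed

lemma prime_elem_bv_scale:
  fixes s1 s2 :: "'a::field_gcd"
  assumes "s1 \<noteq> 0" and "s2 \<noteq> 0" and "prime_elem q"
  shows "prime_elem (bv_scale s1 s2 q)"
  using idom_isom_bv_scale[OF assms(1,2)] assms(3) by (rule prime_elem_isom)

definition bv_scale_eigen :: "'a::comm_ring_1 \<Rightarrow> 'a \<Rightarrow> 'a poly poly \<Rightarrow> bool" where
  "bv_scale_eigen s1 s2 q \<longleftrightarrow> (\<exists>c. bv_scale s1 s2 q = bv_const c * q)"

lemma bv_scale_eigen_power:
  assumes "bv_scale_eigen s1 s2 q"
  shows "bv_scale_eigen (s1 ^ n) (s2 ^ n) q"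
proof (induction n)
  case (Suc n)
  from assms obtain c where c: "bv_scale s1 s2 q = bv_const c * q"
    by (auto simp: bv_scale_eigen_def)
  from Suc obtain d where d: "bv_scale (s1 ^ n) (s2 ^ n) q = bv_const d * q"
    by (auto simp: bv_scale_eigen_def)
  have "bv_scale (s1 ^ Suc n) (s2 ^ Suc n) q = bv_scale (s1 ^ n) (s2 ^ n) (bv_scale s1 s2 q)"
    by (simp add: bv_scale_bv_scale mult_ac)
  also have "\<dots> = bv_const (c * d) * q"
    by (simp add: c d bv_scale_bv_const_mult bv_const.hom_mult)
  finally show ?case
    by (auto simp: bv_scale_eigen_def)
qed (auto simp: bv_scale_eigen_def intro: exI[of _ 1])

lemma bv_scale_eigen_if_homogeneous:
  assumes "homogeneous b"
  shows "bv_scale_eigen t t b"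
proof -
  obtain d where d: "\<And>i j. coeff (coeff b i) j \<noteq> 0 \<Longrightarrow> i + j = d"
    using assms unfolding homogeneous_def by blast
  have "bv_scale t t b = bv_const (t ^ d) * b"
  proof (intro poly_eqI)
    fix i j
    show "coeff (coeff (bv_scale t t b) i) j = coeff (coeff (bv_const (t ^ d) * b) i) j"
      using d[of i j] by (cases "coeff (coeff b i) j = 0")
        (auto simp: add.commute simp flip: power_add)
  qed
  then show ?thesis
    by (auto simp: bv_scale_eigen_def)
qed

lemma bv_scale_dvd_of_eigen:
  fixes s1 s2 :: "'a::field_gcd"
  assumes "s1 \<noteq> 0" and "s2 \<noteq> 0" and "bv_scale_eigen s1 s2 b" and "q dvd b"
  shows "bv_scale s1 s2 q dvd b"
proof -
  obtain c where c: "bv_scale s1 s2 b = bv_const c * b"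
    using assms(3) by (auto simp: bv_scale_eigen_def)
  show ?thesis
  proof (cases "c = 0")
    case True
    then have "b = 0"
      using c assms(1,2) by (simp add: bv_const.hom_zero)
    then show ?thesis by simp
  next
    case False
    have "bv_scale s1 s2 q dvd bv_const c * b"
      using bv_scale.hom_dvd[OF assms(4), of s1 s2] c by simp
    then show ?thesis
      using False by (metis dvd_mult_unit_iff' is_unit_bv_iff)
  qed
qed

lemma normalize_bv_scale_of_eigen:
  fixes s1 s2 :: "'a::field_gcd"
  assumes "s1 \<noteq> 0" and "s2 \<noteq> 0" and "bv_scale_eigen s1 s2 q"
  shows "normalize (bv_scale s1 s2 q) = normalize q"
proof -
  obtain c where c: "bv_scale s1 s2 q = bv_const c * q"
    using assms(3) by (auto simp: bv_scale_eigen_def)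
  show ?thesis
  proof (cases "c = 0")
    case True
    then have "q = 0"
      using c assms(1,2) by (simp add: bv_const.hom_zero)
    then show ?thesis by simp
  next
    case False
    then have "is_unit (bv_const c)"
      by (auto simp: is_unit_bv_iff)
    then show ?thesis
      using c by simp
  qed
qed

lemma bv_scale_eigen_of_associated:
  fixes s1 s2 :: "'a::field_gcd"
  assumes "s1 \<noteq> 0" and "s2 \<noteq> 0" and "n \<le> n'"
    and "normalize (bv_scale (s1 ^ n) (s2 ^ n) q) = normalize (bv_scale (s1 ^ n') (s2 ^ n') q)"
  shows "bv_scale_eigen (s1 ^ (n' - n)) (s2 ^ (n' - n)) q"
proof -
  interpret idom_isom "bv_scale (s1 ^ n) (s2 ^ n)"
    using assms(1,2) by (intro idom_isom_bv_scale) simp_all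
  obtain w where "is_unit w" and w: "bv_scale (s1 ^ n') (s2 ^ n') q = w * bv_scale (s1 ^ n) (s2 ^ n) q"
    using assms(4) by (rule associatedE2)
  then obtain c where "w = bv_const c"
    by (auto simp: is_unit_bv_iff)
  have "bv_scale (s1 ^ n') (s2 ^ n') q = bv_scale (s1 ^ n) (s2 ^ n) (bv_scale (s1 ^ (n' - n)) (s2 ^ (n' - n)) q)"
    using assms(3) by (simp add: bv_scale_bv_scale flip: power_add)
  with w have "bv_scale (s1 ^ n) (s2 ^ n) (bv_scale (s1 ^ (n' - n)) (s2 ^ (n' - n)) q)
      = bv_scale (s1 ^ n) (s2 ^ n) (bv_const c * q)"
    by (simp add: \<open>w = bv_const c\<close> bv_scale_bv_const_mult)
  then show ?thesis
    by (auto simp: bv_scale_eigen_def)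
qed

lemma bv_scale_eigen_if_monomial:
  assumes "\<And>i j i' j'. coeff (coeff q i) j \<noteq> 0 \<Longrightarrow> coeff (coeff q i') j' \<noteq> 0 \<Longrightarrow> i = i' \<and> j = j'"
  shows "bv_scale_eigen s1 s2 q"
proof (cases "q = 0")
  case True
  then show ?thesis
    by (auto simp: bv_scale_eigen_def bv_scale.hom_zero)
next
  case False
  then have "coeff (coeff q (degree q)) (degree (coeff q (degree q))) \<noteq> 0"
    by simp
  then obtain i0 j0 where ij0: "coeff (coeff q i0) j0 \<noteq> 0"
    by blast
  have "bv_scale s1 s2 q = bv_const (s1 ^ j0 * s2 ^ i0) * q"
  proof (intro poly_eqI)
    fix i j
    show "coeff (coeff (bv_scale s1 s2 q) i) j = coeff (coeff (bv_const (s1 ^ j0 * s2 ^ i0) * q) i) j"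
      using assms[OF ij0, of i j] by (cases "coeff (coeff q i) j = 0") auto
  qed
  then show ?thesis
    by (auto simp: bv_scale_eigen_def)
qed

lemma bv_scale_eigen_coeffD:
  fixes s1 s2 :: "'a::idom"
  assumes "bv_scale_eigen s1 s2 q"
  obtains c where "\<And>i j. coeff (coeff q i) j \<noteq> 0 \<Longrightarrow> s1 ^ j * s2 ^ i = c"
proof -
  obtain c where c: "bv_scale s1 s2 q = bv_const c * q"
    using assms by (auto simp: bv_scale_eigen_def)
  have "s1 ^ j * s2 ^ i = c" if "coeff (coeff q i) j \<noteq> 0" for i j
    using arg_cong[OF c, of "\<lambda>p. coeff (coeff p i) j"] that by simp
  then show ?thesis by (rule that)
qed

lemma monomial_if_bv_scale_eigen:
  fixes s r1 r2 :: "'a::field"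
  assumes "s \<noteq> 0" and "\<not> root_of_unity s" and "r1 \<noteq> 0" and "r2 \<noteq> 0"
    and "\<not> root_of_unity (r1 / r2)"
    and "bv_scale_eigen s s q" and "bv_scale_eigen r1 r2 q"
    and "coeff (coeff q i) j \<noteq> 0" and "coeff (coeff q i') j' \<noteq> 0"
  shows "i = i' \<and> j = j'"
proof -
  obtain c where c: "\<And>i j. coeff (coeff q i) j \<noteq> 0 \<Longrightarrow> s ^ j * s ^ i = c"
    using bv_scale_eigen_coeffD[OF assms(6)] by blast
  obtain d where d: "\<And>i j. coeff (coeff q i) j \<noteq> 0 \<Longrightarrow> r1 ^ j * r2 ^ i = d"
    using bv_scale_eigen_coeffD[OF assms(7)] by blast
  have "s ^ (i + j) = s ^ (i' + j')"
    using c[OF assms(8)] c[OF assms(9)] by (simp add: power_add mult.commute)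
  then have degree_eq: "i + j = i' + j'"
    by (rule power_inject_exp_not_root_of_unity[OF assms(1,2)])
  have split: "r1 ^ j * r2 ^ i = (r1 / r2) ^ j * r2 ^ (i + j)" for i j
    using assms(4) by (simp add: power_divide power_add)
  have "(r1 / r2) ^ j * r2 ^ (i + j) = (r1 / r2) ^ j' * r2 ^ (i + j)"
    using d[OF assms(8)] d[OF assms(9)] by (simp add: split degree_eq)
  then have "(r1 / r2) ^ j = (r1 / r2) ^ j'"
    using assms(4) by simp
  then have "j = j'"
    using assms(3,4,5) by (intro power_inject_exp_not_root_of_unity) simp_all
  with degree_eq show ?thesis
    by simp
qed

lemma prime_factor_bv_scale_eigen:
  fixes s1 s2 :: "'a::field_gcd"
  assumes "s1 \<noteq> 0" and "s2 \<noteq> 0" and "b \<noteq> 0" and "bv_scale_eigen s1 s2 b"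
    and "prime_elem q" and "q dvd b"
  obtains k where "k > 0" and "bv_scale_eigen (s1 ^ k) (s2 ^ k) q"
proof -
  define Q where "Q n = bv_scale (s1 ^ n) (s2 ^ n) q" for n
  have "normalize (Q n) \<in> prime_factors b" for n
  proof -
    have "prime_elem (Q n)"
      unfolding Q_def using assms(1,2,5) by (simp add: prime_elem_bv_scale)
    moreover have "Q n dvd b"
      unfolding Q_def using assms by (intro bv_scale_dvd_of_eigen bv_scale_eigen_power) simp_all
    ultimately show ?thesis
      using assms(3) by (auto intro!: prime_factorsI)
  qed
  then have "finite (range (\<lambda>n. normalize (Q n)))"
    by (auto intro: finite_subset)
  then have "\<not> inj (\<lambda>n. normalize (Q n))"
    using finite_imageD infinite_UNIV_nat by blast
  then obtain n n' where "n \<noteq> n'" and "normalize (Q n) = normalize (Q n')"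
    by (auto simp: inj_def)
  then obtain n n' where "n < n'" and "normalize (Q n) = normalize (Q n')"
    by (metis linorder_neqE_nat)
  then have "bv_scale_eigen (s1 ^ (n' - n)) (s2 ^ (n' - n)) q"
    unfolding Q_def using assms(1,2) by (intro bv_scale_eigen_of_associated) simp_all
  with \<open>n < n'\<close> show ?thesis
    by (intro that[of "n' - n"]) simp_all
qed

lemma normalize_bv_scale_power_if_recurrent:
  fixes t l1 l2 :: "'a::field_gcd"
  assumes "t \<noteq> 0" and "\<not> root_of_unity t"
    and "l1 \<noteq> 0" and "l2 \<noteq> 0" and "\<not> root_of_unity (l1 / l2)"
    and "b \<noteq> 0" and "bv_scale_eigen t t b" and "prime_elem q" and "q dvd b"
    and "m < m'"
    and "normalize (bv_scale (l1 ^ m) (l2 ^ m) q) = normalize (bv_scale (l1 ^ m') (l2 ^ m') q)"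
  shows "normalize (bv_scale (l1 ^ m) (l2 ^ m) q) = normalize q"
proof -
  obtain k where "k > 0" and eigen_t: "bv_scale_eigen (t ^ k) (t ^ k) q"
    using assms(1,1,6-9) by (rule prime_factor_bv_scale_eigen)
  have eigen_l: "bv_scale_eigen (l1 ^ (m' - m)) (l2 ^ (m' - m)) q"
    using assms(3,4,10,11) by (intro bv_scale_eigen_of_associated) simp_all
  have "\<not> root_of_unity (t ^ k)"
    using assms(2) \<open>k > 0\<close> by (rule not_root_of_unity_power)
  moreover have "\<not> root_of_unity (l1 ^ (m' - m) / l2 ^ (m' - m))"
    using not_root_of_unity_power[OF assms(5), of "m' - m"] assms(10) by (simp add: power_divide)
  ultimately have "i = i' \<and> j = j'"
    if "coeff (coeff q i) j \<noteq> 0" and "coeff (coeff q i') j' \<noteq> 0" for i j i' j'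
    using assms(1,3,4) by (intro monomial_if_bv_scale_eigen[OF _ _ _ _ _ eigen_t eigen_l that]) simp_all
  then have "bv_scale_eigen (l1 ^ m) (l2 ^ m) q"
    by (rule bv_scale_eigen_if_monomial)
  then show ?thesis
    using assms(3,4) by (intro normalize_bv_scale_of_eigen) simp_all
qed

lemma not_coprime_bv_scale_imp_prime_factors:
  fixes a b :: "'a::field_gcd poly poly"
  assumes "s1 \<noteq> 0" and "s2 \<noteq> 0" and "a \<noteq> 0" and "b \<noteq> 0"
    and "\<not> coprime a (bv_scale s1 s2 b)"
  shows "\<exists>p\<in>prime_factors a. \<exists>q\<in>prime_factors b. p dvd bv_scale s1 s2 q"
proof -
  obtain g where "g dvd a" and "g dvd bv_scale s1 s2 b" and "\<not> is_unit g"
    using assms(5) by (rule not_coprimeE)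
  moreover from \<open>g dvd a\<close> assms(3) have "g \<noteq> 0"
    by auto
  ultimately obtain p where "p dvd g" and "prime p"
    by (metis prime_divisor_exists)
  moreover from \<open>p dvd g\<close> \<open>g dvd a\<close> have "p dvd a"
    by (rule dvd_trans)
  ultimately have p: "p \<in> prime_factors a"
    using assms(3) by (intro prime_factorsI)
  define q where "q = bv_scale (inverse s1) (inverse s2) p"
  have scale_q: "bv_scale s1 s2 q = p"
    using assms(1,2) by (simp add: q_def bv_scale_bv_scale)
  from \<open>p dvd g\<close> \<open>g dvd bv_scale s1 s2 b\<close> have "p dvd bv_scale s1 s2 b"
    by (rule dvd_trans)
  then have "q dvd bv_scale (inverse s1) (inverse s2) (bv_scale s1 s2 b)"
    unfolding q_def by (rule bv_scale.hom_dvd)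
  then have "q dvd b"
    using assms(1,2) by (simp add: bv_scale_bv_scale)
  moreover have "prime_elem q"
    unfolding q_def using \<open>prime p\<close> assms(1,2) by (simp add: prime_elem_bv_scale)
  ultimately have "normalize q \<in> prime_factors b"
    using assms(4) by (auto intro!: prime_factorsI)
  moreover have "p dvd bv_scale s1 s2 (normalize q)"
    unfolding scale_q[symmetric] by (intro bv_scale.hom_dvd) simp
  ultimately show ?thesis
    using p by blast
qed

lemma finite_not_coprime_bv_scale:
  fixes a b :: "'a::field_gcd poly poly"
  assumes "t \<noteq> 0" and "\<not> root_of_unity t"
    and "l1 \<noteq> 0" and "l2 \<noteq> 0" and "\<not> root_of_unity (l1 / l2)"
    and "a \<noteq> 0" and "b \<noteq> 0" and "coprime a b" and "bv_scale_eigen t t b"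
  shows "finite {m. \<not> coprime a (bv_scale (l1 ^ m) (l2 ^ m) b)}"
proof -
  define hits where "hits p q = {m. p dvd bv_scale (l1 ^ m) (l2 ^ m) q}" for p q
  have covered: "{m. \<not> coprime a (bv_scale (l1 ^ m) (l2 ^ m) b)}
      \<subseteq> (\<Union>p\<in>prime_factors a. \<Union>q\<in>prime_factors b. hits p q)"
    using not_coprime_bv_scale_imp_prime_factors[of "l1 ^ _" "l2 ^ _" a b] assms(3,4,6,7)
    by (fastforce simp: hits_def)
  have "finite (hits p q)" if "p \<in> prime_factors a" and "q \<in> prime_factors b" for p q
  proof -
    from that have p: "prime_elem p" "p dvd a" and q: "prime_elem q" "q dvd b"
      by (auto simp: in_prime_factors_iff prime_def)
    have assoc: "normalize p = normalize (bv_scale (l1 ^ n) (l2 ^ n) q)" if "n \<in> hits p q" for n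
      using p(1) q(1) assms(3,4) that
      by (intro prime_elem_associated) (simp_all add: hits_def prime_elem_bv_scale)
    have at_most_once: False if "m < m'" and "m \<in> hits p q" and "m' \<in> hits p q" for m m'
    proof -
      have "normalize (bv_scale (l1 ^ m) (l2 ^ m) q) = normalize (bv_scale (l1 ^ m') (l2 ^ m') q)"
        using assoc[OF that(2)] assoc[OF that(3)] by simp
      then have "normalize (bv_scale (l1 ^ m) (l2 ^ m) q) = normalize q"
        by (rule normalize_bv_scale_power_if_recurrent[OF assms(1-5,7,9) q \<open>m < m'\<close>])
      with assoc[OF that(2)] have "p dvd q"
        by (intro associatedD1) simp
      then have "is_unit p"
        using p(2) q(2) assms(8) by (meson coprime_common_divisor dvd_trans)
      with p(1) show False
        by (simp add: prime_elem_not_unit)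
    qed
    have "hits p q \<subseteq> {LEAST m. m \<in> hits p q}"
    proof
      fix m
      assume "m \<in> hits p q"
      then have "(LEAST m. m \<in> hits p q) \<in> hits p q" and "(LEAST m. m \<in> hits p q) \<le> m"
        by (auto intro: LeastI Least_le)
      with \<open>m \<in> hits p q\<close> show "m \<in> {LEAST m. m \<in> hits p q}"
        using at_most_once[of "LEAST m. m \<in> hits p q" m] by (auto simp: le_less)
    qed
    then show ?thesis
      by (rule finite_subset) simp
  qed
  then have "finite (\<Union>p\<in>prime_factors a. \<Union>q\<in>prime_factors b. hits p q)"
    by auto
  with covered show ?thesis
    by (rule finite_subset)
qed

section \<open>Diagonalizing the difference operator\<close>

lemma shift_matrix_eigenvalue:
  fixes u v l :: "'a::field"
  assumes "eigenvalue (shift_matrix u v) l"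
  shows "l * l = v * l + u"
proof -
  have "dim_row (shift_matrix u v) = 2"
    by (simp add: shift_matrix_def mat_of_rows_list_def)
  then obtain w where w: "w \<in> carrier_vec 2" "w \<noteq> 0\<^sub>v 2" and eig: "shift_matrix u v *\<^sub>v w = l \<cdot>\<^sub>v w"
    using assms unfolding eigenvalue_def eigenvector_def by auto
  have row0: "u * vec_index w 1 = l * vec_index w 0" and row1: "vec_index w 0 + v * vec_index w 1 = l * vec_index w 1"
    using arg_cong[OF eig, of "\<lambda>x. vec_index x 0"] arg_cong[OF eig, of "\<lambda>x. vec_index x 1"] w(1)
    by (auto simp: shift_matrix_def mat_of_rows_list_def mult_mat_vec_def scalar_prod_def
        numeral_2_eq_2)
  have "vec_index w 1 \<noteq> 0"
  proof
    assume "vec_index w 1 = 0"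
    with row1 have "vec_index w 0 = 0"
      by simp
    with \<open>vec_index w 1 = 0\<close> w(1) have "w = 0\<^sub>v 2"
      by (intro eq_vecI) (auto simp: less_2_cases_iff)
    with w(2) show False ..
  qed
  have w0: "vec_index w 0 = (l - v) * vec_index w 1"
    using row1 by (simp add: algebra_simps)
  have "(l * l - v * l - u) * vec_index w 1 = l * vec_index w 0 - u * vec_index w 1"
    by (subst w0) (simp add: algebra_simps)
  with row0 have "(l * l - v * l - u) * vec_index w 1 = 0"
    by simp
  with \<open>vec_index w 1 \<noteq> 0\<close> have "l * l - v * l - u = 0"
    by simp
  then show ?thesis
    by (simp add: diff_eq_eq add.commute)
qed

lemma shift_matrix_distinct_eigenvalues:
  fixes u v l1 l2 :: "'a::field"
  assumes "eigenvalue (shift_matrix u v) l1" and "eigenvalue (shift_matrix u v) l2"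
    and "l1 \<noteq> l2"
  shows "v = l1 + l2" and "u = - (l1 * l2)"
proof -
  have "(l1 - l2) * (l1 + l2 - v) = 0"
    using shift_matrix_eigenvalue[OF assms(1)] shift_matrix_eigenvalue[OF assms(2)]
    by (simp add: algebra_simps)
  with assms(3) show "v = l1 + l2"
    by simp
  with shift_matrix_eigenvalue[OF assms(1)] have "u + l1 * l2 = 0"
    by (simp add: algebra_simps)
  then show "u = - (l1 * l2)"
    by (simp add: eq_neg_iff_add_eq_0)
qed

text \<open>If \<open>\<lambda>\<^sub>1, \<lambda>\<^sub>2\<close> are the eigenvalues of the shift matrix, then
  \<open>\<sigma>(\<beta> - \<lambda>\<^sub>2 \<alpha>) = \<lambda>\<^sub>1 (\<beta> - \<lambda>\<^sub>2 \<alpha>)\<close> and \<open>\<sigma>(\<beta> - \<lambda>\<^sub>1 \<alpha>) = \<lambda>\<^sub>2 (\<beta> - \<lambda>\<^sub>1 \<alpha>)\<close>;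
  substituting these eigenvectors for \<open>\<alpha>, \<beta>\<close> diagonalizes \<open>\<sigma>\<close>.\<close>

definition bv_eigen_subst :: "'a::comm_ring_1 \<Rightarrow> 'a \<Rightarrow> 'a poly poly \<Rightarrow> 'a poly poly" where
  "bv_eigen_subst l1 l2 p =
     bv_eval p (bv_beta - bv_const l2 * bv_alpha) (bv_beta - bv_const l1 * bv_alpha)"

lemma bv_sigma_bv_eigen_subst:
  "bv_sigma (- (l1 * l2)) (l1 + l2) (bv_eigen_subst l1 l2 p) = bv_eigen_subst l1 l2 (bv_scale l1 l2 p)"
  unfolding bv_sigma_def bv_eigen_subst_def bv_eval_bv_eval bv_eval_bv_scale
  by (simp add: bv_eval.hom_mult bv_eval.hom_minus bv_const.hom_mult bv_const.hom_add
      bv_const.hom_uminus algebra_simps)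

lemma bv_sigma_power_bv_eigen_subst:
  "(bv_sigma (- (l1 * l2)) (l1 + l2) ^^ m) (bv_eigen_subst l1 l2 p)
     = bv_eigen_subst l1 l2 (bv_scale (l1 ^ m) (l2 ^ m) p)"
  by (induction m) (simp_all add: bv_sigma_bv_eigen_subst bv_scale_bv_scale)

lemma idom_isom_bv_eigen_subst:
  fixes l1 l2 :: "'a::field"
  assumes "l1 \<noteq> l2"
  shows "idom_isom (bv_eigen_subst l1 l2)"
proof -
  define w where "w = inverse (l1 - l2)"
  have w: "w * (l1 - l2) = 1"
    using assms by (simp add: w_def)
  define inv_subst where "inv_subst p = bv_eval p (bv_const w * (bv_alpha - bv_beta))
      (bv_const w * (bv_const l1 * bv_alpha - bv_const l2 * bv_beta))" for p
  show ?thesis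
  proof (rule idom_isomI[where g = inv_subst])
    show "comm_ring_hom (bv_eigen_subst l1 l2)"
      by (simp add: bv_eigen_subst_def[abs_def] bv_eval.comm_ring_hom_axioms)
  next
    fix p
    have "inv_subst (bv_eigen_subst l1 l2 p)
        = bv_eval p (bv_const (w * (l1 - l2)) * bv_alpha) (bv_const (w * (l1 - l2)) * bv_beta)"
      unfolding inv_subst_def bv_eigen_subst_def bv_eval_bv_eval
      by (simp add: bv_eval.hom_mult bv_eval.hom_minus bv_const.hom_mult bv_const.hom_minus
          algebra_simps)
    then show "inv_subst (bv_eigen_subst l1 l2 p) = p"
      by (simp add: w)
  next
    fix p
    have "bv_eigen_subst l1 l2 (inv_subst p)
        = bv_eval p (bv_const (w * (l1 - l2)) * bv_alpha) (bv_const (w * (l1 - l2)) * bv_beta)"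
      unfolding inv_subst_def bv_eigen_subst_def bv_eval_bv_eval
      by (simp add: bv_eval.hom_mult bv_eval.hom_minus bv_const.hom_mult bv_const.hom_minus
          algebra_simps)
    then show "bv_eigen_subst l1 l2 (inv_subst p) = p"
      by (simp add: w)
  qed
qed

lemma bv_scale_bv_eigen_subst:
  "bv_scale t t (bv_eigen_subst l1 l2 p) = bv_eigen_subst l1 l2 (bv_scale t t p)"
  unfolding bv_eigen_subst_def bv_scale_bv_eval bv_eval_bv_scale
  by (simp add: bv_scale.hom_minus bv_scale.hom_mult algebra_simps)

lemma bv_scale_eigen_bv_eigen_substD:
  fixes l1 l2 :: "'a::field"
  assumes "l1 \<noteq> l2" and "bv_scale_eigen t t (bv_eigen_subst l1 l2 p)"
  shows "bv_scale_eigen t t p"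
proof -
  interpret idom_isom "bv_eigen_subst l1 l2"
    using assms(1) by (rule idom_isom_bv_eigen_subst)
  obtain c where "bv_scale t t (bv_eigen_subst l1 l2 p) = bv_const c * bv_eigen_subst l1 l2 p"
    using assms(2) by (auto simp: bv_scale_eigen_def)
  then have "bv_eigen_subst l1 l2 (bv_scale t t p) = bv_eigen_subst l1 l2 (bv_const c * p)"
    by (simp only: bv_scale_bv_eigen_subst hom_mult) (simp add: bv_eigen_subst_def)
  then show ?thesis
    by (auto simp: bv_scale_eigen_def)
qed

theorem theorem2p3:
  fixes u v l1 l2 :: "'a::field_gcd" and a b :: "'a poly poly"
  assumes "u \<noteq> 0"
    and "eigenvalue (shift_matrix u v) l1" and "eigenvalue (shift_matrix u v) l2"
    and "l1 \<noteq> l2"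
    and "\<not> root_of_unity (l1 / l2)"
    and "a \<noteq> 0" and "b \<noteq> 0"
    and "homogeneous a" and "homogeneous b"
    and "coprime a b"
  shows "finite (spread u v a b)"
proof -
  note uv = shift_matrix_distinct_eigenvalues[OF assms(2-4)]
  have "l1 \<noteq> 0" and "l2 \<noteq> 0"
    using assms(1) uv(2) by auto
  define \<phi> where "\<phi> = bv_eigen_subst l1 l2"
  have isom: "idom_isom \<phi>"
    unfolding \<phi>_def using assms(4) by (rule idom_isom_bv_eigen_subst)
  then interpret \<phi>: idom_isom \<phi> .
  obtain a' b' where a: "a = \<phi> a'" and b: "b = \<phi> b'"
    by (metis \<phi>.bij bij_pointE)
  have "bv_scale_eigen (l1 / l2) (l1 / l2) b'"
    using bv_scale_eigen_if_homogeneous[OF assms(9)] unfolding b \<phi>_def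
    by (rule bv_scale_eigen_bv_eigen_substD[OF assms(4)])
  moreover have "a' \<noteq> 0" and "b' \<noteq> 0" and "coprime a' b'"
    using assms(6,7,10) by (simp_all add: a b coprime_isom_iff[OF isom])
  ultimately have "finite {m. \<not> coprime a' (bv_scale (l1 ^ m) (l2 ^ m) b')}"
    using \<open>l1 \<noteq> 0\<close> \<open>l2 \<noteq> 0\<close> assms(5) by (intro finite_not_coprime_bv_scale) simp_all
  moreover have "spread u v a b \<subseteq> {m. \<not> coprime a' (bv_scale (l1 ^ m) (l2 ^ m) b')}"
    using spread_subset_not_coprime[of u v a b]
    by (simp add: uv a b \<phi>_def bv_sigma_power_bv_eigen_subst coprime_isom_iff[OF isom, unfolded \<phi>_def])
  ultimately show ?thesis
    by (rule finite_subset[rotated])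
qed

end
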